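(* Consider binary node classification with classes $\{0,1\}$, let $k\in\{0,1\}$, and let $c_0,c_1\in(0,1)$ be the class homophily parameters. Assume the classes are balanced ($P(\hat{Y}=0)=P(\hat{Y}=1)$), the graph is heterophilic ($c_k<1-c_{1-k}$), and $0<c_k<0.5$. If two nodes $n$ and $m$ have the same degree $d$ and $|\mathcal{N}_k(n)| > |\mathcal{N}_k(m)|$, then $$P\big(\hat{Y}_{n} = k \mid \{Y_j\}_{j\in\mathcal{N}(n)}\big) < P\big(\hat{Y}_{m} = k \mid \{Y_j\}_{j\in\mathcal{N}(m)}\big).$$
   Context: Model: each node $i$ has a (latent/soft) class $\hat{Y}_i\in\{0,1\}$, and each neighbor $j\in\mathcal{N}(i)$ has an observed label $Y_j\in\{0,1\}$. Given $\hat{Y}_i$, the neighbor labels are conditionally independent with $P(Y_j=k\mid \hat{Y}_i=k)=c_k$ and $P(Y_j=1-k\mid\hat{Y}_i=k)=1-c_k$ for $k\in\{0,1\}$ ($c_k$ is the class homophily of class $k$). The posterior is obtained by Bayes' rule: $P(\hat Y_i=k\mid\{Y_j=y_j\}_{j\in\mathcal N(i)})\propto P(\hat Y_i=k)\prod_{j\in\mathcal N(i)}P(Y_j=y_j\mid \hat Y_i=k)$, conditioning on the observed neighbor labels. Notation: $\mathcal{N}_k(i)=\{j\in\mathcal{N}(i): y_j=k\}$, $\mathcal{N}_{1-k}(i)=\{j\in\mathcal{N}(i): y_j=1-k\}$, and the degree of $i$ is $|\mathcal N(i)|=|\mathcal{N}_k(i)|+|\mathcal{N}_{1-k}(i)|$.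 *)

theory Defs
  imports Complex_Main
begin

text \<open>Classes and labels are the naturals 0 and 1. c k is the class homophily of class k.
  Likelihood of an observed neighbour label y given latent class k of the centre node.\<close>
definition lik :: "(nat \<Rightarrow> real) \<Rightarrow> nat \<Rightarrow> nat \<Rightarrow> real" where
  "lik c k y = (if y = k then c k else 1 - c k)"

text \<open>Posterior P(Yhat_i = k | {Y_j = y j}_{j in Nb}) by Bayes' rule, with prior
  P(Yhat = k') = prior k', neighbours conditionally independent.\<close>
definition posterior :: "(nat \<Rightarrow> real) \<Rightarrow> (nat \<Rightarrow> real) \<Rightarrow> ('a \<Rightarrow> nat) \<Rightarrow> 'a set \<Rightarrow> nat \<Rightarrow> real" where
  "posterior prior c y Nb k =
     prior k * (\<Prod>j\<in>Nb. lik c k (y j)) /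
     (\<Sum>k'\<in>{0,1}. prior k' * (\<Prod>j\<in>Nb. lik c k' (y j)))"

end

theory Submission
  imports Defs
begin

(* With equal priors the posterior of class k is L/(L + M), where L and M are the likelihoods of
   the neighbourhood under classes k and 1 - k. Both are monomials in the numbers of k-labelled and
   other neighbours, so for a fixed degree d, moving one neighbour from label 1 - k to label k
   multiplies L/M by c_k c_(1-k) / ((1 - c_k)(1 - c_(1-k))), which is below 1 exactly by
   heterophily. Hence more k-labelled neighbours means a smaller posterior of class k. *)

definition likelihood :: "(nat \<Rightarrow> real) \<Rightarrow> ('a \<Rightarrow> nat) \<Rightarrow> 'a set \<Rightarrow> nat \<Rightarrow> real" where
  "likelihood c y Nb k = (\<Prod>j\<in>Nb. lik c k (y j))"

lemma posterior_balanced: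
  assumes "k \<in> {0, 1}" and "prior 0 = prior 1" and "prior 0 \<noteq> 0"
  shows "posterior prior c y Nb k =
    likelihood c y Nb k / (likelihood c y Nb k + likelihood c y Nb (1 - k))"
proof -
  have "posterior prior c y Nb k = prior 0 * likelihood c y Nb k /
      (prior 0 * likelihood c y Nb k + prior 0 * likelihood c y Nb (1 - k))"
    using assms(1,2) by (auto simp: posterior_def likelihood_def)
  then show ?thesis
    using assms(3) by (simp add: distrib_left[symmetric])
qed

lemma card_filter_add_card_filter_not:
  assumes "finite S"
  shows "card {j \<in> S. P j} + card {j \<in> S. \<not> P j} = card S"
proof -
  have "card ({j \<in> S. P j} \<union> {j \<in> S. \<not> P j}) = card {j \<in> S. P j} + card {j \<in> S. \<not> P j}"
    using assms by (intro card_Un_disjoint) auto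
  moreover have "{j \<in> S. P j} \<union> {j \<in> S. \<not> P j} = S" by auto
  ultimately show ?thesis by simp
qed

lemma likelihood_binary_labels:
  assumes "finite S" and "\<forall>j \<in> S. y j \<in> {0, 1}" and "k \<in> {0, 1}"
  shows "likelihood c y S k' =
    lik c k' k ^ card {j \<in> S. y j = k} * lik c k' (1 - k) ^ card {j \<in> S. y j \<noteq> k}"
proof -
  have "likelihood c y S k' = (\<Prod>j\<in>S. if y j = k then lik c k' k else lik c k' (1 - k))"
    unfolding likelihood_def using assms(2,3) by (intro prod.cong) auto
  also have "\<dots> = (\<Prod>j\<in>S \<inter> {j. y j = k}. lik c k' k) * (\<Prod>j\<in>S \<inter> - {j. y j = k}. lik c k' (1 - k))"
    using assms(1) by (rule prod.If_cases)
  also have "\<dots> = lik c k' k ^ card {j \<in> S. y j = k} * lik c k' (1 - k) ^ card {j \<in> S. y j \<noteq> k}"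
    by (simp add: Int_def Diff_eq[symmetric] set_diff_eq conj_commute)
  finally show ?thesis .
qed

lemma fraction_less_fraction_cross:
  fixes l m l' m' :: "'a :: linordered_field"
  assumes "0 < l" "0 < m" "0 < l'" "0 < m'" and "l * m' < l' * m"
  shows "l / (l + m) < l' / (l' + m')"
  using assms by (simp add: divide_simps algebra_simps)

lemma monomial_cross_less:
  fixes \<alpha> \<beta> \<gamma> \<delta> :: "'a :: linordered_idom"
  assumes pos: "0 < \<alpha>" "0 < \<beta>" "0 < \<gamma>" "0 < \<delta>" and less: "\<alpha> * \<delta> < \<beta> * \<gamma>"
    and sum_eq: "i + j = i' + j'" and "i' < i"
  shows "\<alpha> ^ i * \<beta> ^ j * (\<gamma> ^ i' * \<delta> ^ j') < \<alpha> ^ i' * \<beta> ^ j' * (\<gamma> ^ i * \<delta> ^ j)"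
proof -
  define e where "e = i - i'"
  have i: "i = i' + e" and j': "j' = j + e" and "0 < e"
    using sum_eq \<open>i' < i\<close> unfolding e_def by auto
  define X where "X = \<alpha> ^ i' * \<beta> ^ j * \<gamma> ^ i' * \<delta> ^ j"
  have "0 < X" unfolding X_def using pos by simp
  have "\<alpha> ^ i * \<beta> ^ j * (\<gamma> ^ i' * \<delta> ^ j') = X * (\<alpha> * \<delta>) ^ e"
    unfolding X_def i j' by (simp add: power_add power_mult_distrib ac_simps)
  also have "\<dots> < X * (\<beta> * \<gamma>) ^ e"
    using \<open>0 < X\<close> \<open>0 < e\<close> pos less by (intro mult_strict_left_mono power_strict_mono) auto
  also have "\<dots> = \<alpha> ^ i' * \<beta> ^ j' * (\<gamma> ^ i * \<delta> ^ j)"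
    unfolding X_def i j' by (simp add: power_add power_mult_distrib ac_simps)
  finally show ?thesis .
qed

theorem mainTheorem3:
  fixes N :: "'a \<Rightarrow> 'a set" and y :: "'a \<Rightarrow> nat"
    and prior c :: "nat \<Rightarrow> real" and k d :: nat and n m :: 'a
  assumes k: "k \<in> {0, 1}"
    and c0: "0 < c 0 \<and> c 0 < 1" and c1: "0 < c 1 \<and> c 1 < 1"
    and prior_nonneg: "prior 0 \<ge> 0" "prior 1 \<ge> 0"
    and prior_sum: "prior 0 + prior 1 = 1"
    and balanced: "prior 0 = prior 1"
    and heterophilic: "c k < 1 - c (1 - k)"
    and ck: "0 < c k \<and> c k < 1/2"
    and labels: "\<forall>j \<in> N n \<union> N m. y j \<in> {0, 1}"
    and fin: "finite (N n)" "finite (N m)"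
    and deg: "card (N n) = d" "card (N m) = d"
    and more: "card {j \<in> N n. y j = k} > card {j \<in> N m. y j = k}"
  shows "posterior prior c y (N n) k < posterior prior c y (N m) k"
proof -
  have prior: "prior 0 \<noteq> 0"
    using prior_sum balanced by simp
  have lik_k: "lik c k k = c k" "lik c k (1 - k) = 1 - c k"
    and lik_other: "lik c (1 - k) k = 1 - c (1 - k)" "lik c (1 - k) (1 - k) = c (1 - k)"
    using k by (auto simp: lik_def)
  have posterior_eq: "posterior prior c y S k =
      c k ^ card {j \<in> S. y j = k} * (1 - c k) ^ card {j \<in> S. y j \<noteq> k} /
      (c k ^ card {j \<in> S. y j = k} * (1 - c k) ^ card {j \<in> S. y j \<noteq> k} +
       (1 - c (1 - k)) ^ card {j \<in> S. y j = k} * c (1 - k) ^ card {j \<in> S. y j \<noteq> k})"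
    if "finite S" "\<forall>j \<in> S. y j \<in> {0, 1}" for S
    unfolding posterior_balanced[OF k balanced prior] likelihood_binary_labels[OF that k]
      lik_k lik_other ..
  have bounds: "0 < c k" "c k < 1" "0 < c (1 - k)" "c (1 - k) < 1"
    using k c0 c1 by auto
  have "c k * c (1 - k) < (1 - c k) * (1 - c (1 - k))"
    using heterophilic by (simp add: algebra_simps)
  moreover have "card {j \<in> N n. y j = k} + card {j \<in> N n. y j \<noteq> k} =
      card {j \<in> N m. y j = k} + card {j \<in> N m. y j \<noteq> k}"
    using fin deg by (simp add: card_filter_add_card_filter_not)
  moreover have labels_n: "\<forall>j \<in> N n. y j \<in> {0, 1}" and labels_m: "\<forall>j \<in> N m. y j \<in> {0, 1}"
    using labels by auto
  ultimately show ?thesis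
    unfolding posterior_eq[OF fin(1) labels_n] posterior_eq[OF fin(2) labels_m]
    using more bounds
    by (intro fraction_less_fraction_cross monomial_cross_less) auto
qed

end
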